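(* Let $d\ge2$. For any feed-forward neural network architecture $\mathcal{A}$ with $d$ input neurons and the Heaviside activation $\sigma(x)=\mathds{1}_{x\ge0}$, the set $H_{\mathcal{A}}$ satisfies \[ \sup_{f \in \mathcal{M}^d} \inf_{g \in H_{\mathcal{A}}} \|f - g\|_{\infty} \geq \frac{1}{2}, \] where $\|\cdot\|_\infty$ is the sup norm on $[0,1]^d$.
   Context: $\mathcal{M}^d$ is the set of all functions $f:[0,1]^d\to[0,1]$ that are non-decreasing in the sense that $x_i\le y_i$ for all $i=1,\dots,d$ implies $f(x)\le f(y)$. A feed-forward architecture $\mathcal{A}$ is a directed acyclic graph with $d$ input nodes (in-degree $0$), a single output node (out-degree $0$), skip connections allowed; a real weight is attached to every edge and every non-input node. For weights $\mathbf w$, input neuron $v$ outputs $x_v$, each hidden neuron outputs $\sigma(\sum_{u\in P_v}w_{u\to v}y_u+w_v)$ ($P_v$ = predecessors), the output neuron outputs $\sum_{u\in P_v}w_{u\to v}y_u+w_v$; $H_{\mathcal{A}}$ is the set of all functions on $[0,1]^d$ so computed over all weight vectors. *)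

theory Defs
  imports "HOL-Analysis.Analysis"
begin

text \<open>Points of [0,1]^d are encoded as functions nat => real with coordinates
  0..d-1 in [0,1] and all other coordinates equal to 0.\<close>
definition unit_cube :: "nat \<Rightarrow> (nat \<Rightarrow> real) set" where
  "unit_cube d = {x. (\<forall>i<d. 0 \<le> x i \<and> x i \<le> 1) \<and> (\<forall>i\<ge>d. x i = 0)}"

definition monotone_class :: "nat \<Rightarrow> ((nat \<Rightarrow> real) \<Rightarrow> real) set" where
  "monotone_class d = {f. (\<forall>x\<in>unit_cube d. 0 \<le> f x \<and> f x \<le> 1) \<and>
     (\<forall>x\<in>unit_cube d. \<forall>y\<in>unit_cube d. (\<forall>i<d. x i \<le> y i) \<longrightarrow> f x \<le> f y)}"

definition heaviside :: "real \<Rightarrow> real" where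
  "heaviside t = (if t \<ge> 0 then 1 else 0)"

text \<open>Architecture: nodes 0..N-1 numbered in a topological order; nodes 0..d-1 are the
  input nodes (exactly the nodes of in-degree 0), node N-1 is the output node (the unique
  node of out-degree 0); E is the edge set.  Every finite DAG with these properties is
  isomorphic to one numbered this way.\<close>
definition architecture :: "nat \<Rightarrow> nat \<Rightarrow> (nat \<times> nat) set \<Rightarrow> bool" where
  "architecture d N E \<longleftrightarrow> d < N \<and>
     (\<forall>(u,v)\<in>E. u < v \<and> d \<le> v \<and> v < N) \<and>
     (\<forall>v. d \<le> v \<and> v < N \<longrightarrow> (\<exists>u. (u,v) \<in> E)) \<and>
     (\<forall>u. u < N - 1 \<longrightarrow> (\<exists>v. (u,v) \<in> E))"

fun node_val :: "(real \<Rightarrow> real) \<Rightarrow> nat \<Rightarrow> nat \<Rightarrow> (nat \<times> nat) set \<Rightarrow> (nat \<times> nat \<Rightarrow> real)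
    \<Rightarrow> (nat \<Rightarrow> real) \<Rightarrow> (nat \<Rightarrow> real) \<Rightarrow> nat \<Rightarrow> real" where
  "node_val \<sigma> d N E w b x v =
     (if v < d then x v
      else (let s = (\<Sum>u<v. if (u,v) \<in> E then w (u,v) * node_val \<sigma> d N E w b x u else 0) + b v
            in if v = N - 1 then s else \<sigma> s))"

definition H_arch :: "(real \<Rightarrow> real) \<Rightarrow> nat \<Rightarrow> nat \<Rightarrow> (nat \<times> nat) set \<Rightarrow> ((nat \<Rightarrow> real) \<Rightarrow> real) set" where
  "H_arch \<sigma> d N E = {g. \<exists>w b. g = (\<lambda>x. node_val \<sigma> d N E w b x (N - 1))}"

definition sup_dist :: "nat \<Rightarrow> ((nat \<Rightarrow> real) \<Rightarrow> real) \<Rightarrow> ((nat \<Rightarrow> real) \<Rightarrow> real) \<Rightarrow> ereal" where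
  "sup_dist d f g = (SUP x\<in>unit_cube d. ereal \<bar>f x - g x\<bar>)"

end

theory Submission
  imports Defs
begin

text \<open>The target is the indicator of the region on or above the parabola x1 = 1 - x0^2,
  which is monotone on the cube. A Heaviside network has finitely many activation patterns
  of its hidden neurons, so two distinct points a, c of the parabola share a pattern. Since
  pre-activations are affine in the input and the Heaviside function is monotone, the midpoint
  of a and c then has the same pattern as well, and the network output there is the average
  of the outputs at a and c. But the target is 1 at a and c and 0 at their midpoint, which
  lies strictly below the parabola; no average can be within less than 1/2 of all three
  values. The argument works for every monotone activation with finitely many values and uses
  none of the structural conditions on the architecture.\<close>

definition preactivation :: "(real \<Rightarrow> real) \<Rightarrow> nat \<Rightarrow> nat \<Rightarrow> (nat \<times> nat) set
    \<Rightarrow> (nat \<times> nat \<Rightarrow> real) \<Rightarrow> (nat \<Rightarrow> real) \<Rightarrow> (nat \<Rightarrow> real) \<Rightarrow> nat \<Rightarrow> real" where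
  "preactivation \<sigma> d N E w b x v =
     (\<Sum>u<v. if (u,v) \<in> E then w (u,v) * node_val \<sigma> d N E w b x u else 0) + b v"

declare node_val.simps [simp del]

lemma node_val_eq:
  "node_val \<sigma> d N E w b x v =
     (if v < d then x v
      else if v = N - 1 then preactivation \<sigma> d N E w b x v
      else \<sigma> (preactivation \<sigma> d N E w b x v))"
  unfolding preactivation_def by (subst node_val.simps) (simp add: Let_def)

lemma node_val_hidden_in_range:
  assumes "d \<le> v" "v \<noteq> N - 1"
  shows "node_val \<sigma> d N E w b x v \<in> range \<sigma>"
  using assms by (simp add: node_val_eq)

lemma mono_midpoint_eq:
  fixes \<sigma> :: "real \<Rightarrow> 'a::order"
  assumes "mono \<sigma>" "\<sigma> a = \<sigma> c"
  shows "\<sigma> ((a + c) / 2) = \<sigma> a"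
proof -
  have "\<sigma> (min a c) \<le> \<sigma> ((a + c) / 2)" "\<sigma> ((a + c) / 2) \<le> \<sigma> (max a c)"
    by (simp_all add: monoD[OF \<open>mono \<sigma>\<close>])
  moreover have "\<sigma> (min a c) = \<sigma> a" "\<sigma> (max a c) = \<sigma> a"
    using assms(2) by (simp_all add: min_def max_def)
  ultimately show ?thesis by (metis order_antisym)
qed

lemma node_val_midpoint:
  assumes "mono \<sigma>"
    and hidden_eq: "\<And>v. d \<le> v \<Longrightarrow> v < N - 1 \<Longrightarrow>
      node_val \<sigma> d N E w b a v = node_val \<sigma> d N E w b c v"
    and "v \<le> N - 1"
  shows "node_val \<sigma> d N E w b (\<lambda>i. (a i + c i) / 2) v
           = (node_val \<sigma> d N E w b a v + node_val \<sigma> d N E w b c v) / 2"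
  using \<open>v \<le> N - 1\<close>
proof (induction v rule: less_induct)
  case (less v)
  let ?nv = "node_val \<sigma> d N E w b" and ?pre = "preactivation \<sigma> d N E w b"
  let ?m = "\<lambda>i. (a i + c i) / 2"
  have IH: "?nv ?m u = (?nv a u + ?nv c u) / 2" if "u < v" for u
    using less.IH[OF that] that less.prems by simp
  have "?pre ?m v = (\<Sum>u<v. ((if (u,v) \<in> E then w (u,v) * ?nv a u else 0)
                          + (if (u,v) \<in> E then w (u,v) * ?nv c u else 0)) / 2) + b v"
    unfolding preactivation_def
    by (intro arg_cong2[where f="(+)"] sum.cong refl) (auto simp: IH algebra_simps)
  also have "\<dots> = (?pre a v + ?pre c v) / 2"
    unfolding preactivation_def by (simp add: sum_divide_distrib[symmetric] sum.distrib field_simps)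
  finally have pre_mid: "?pre ?m v = (?pre a v + ?pre c v) / 2" .
  consider "v < d" | "v = N - 1" | "d \<le> v" "v < N - 1"
    using less.prems by linarith
  then show ?case
  proof cases
    case 3
    then have same: "\<sigma> (?pre a v) = \<sigma> (?pre c v)"
      using hidden_eq[of v] by (simp add: node_val_eq)
    then have "\<sigma> (?pre ?m v) = \<sigma> (?pre a v)"
      unfolding pre_mid by (rule mono_midpoint_eq[OF \<open>mono \<sigma>\<close>])
    with 3 same show ?thesis by (simp add: node_val_eq)
  qed (use pre_mid in \<open>simp_all add: node_val_eq\<close>)
qed

lemma hidden_values_collide:
  assumes "finite (range \<sigma>)" "infinite S"
  obtains a c where "a \<in> S" "c \<in> S" "a \<noteq> c"
    "\<And>v. d \<le> v \<Longrightarrow> v < N - 1 \<Longrightarrow> node_val \<sigma> d N E w b a v = node_val \<sigma> d N E w b c v"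
proof -
  define pattern where "pattern x = (\<lambda>v\<in>{d..<N-1}. node_val \<sigma> d N E w b x v)" for x
  have "pattern ` S \<subseteq> (\<Pi>\<^sub>E v\<in>{d..<N-1}. range \<sigma>)"
    by (auto simp: pattern_def node_val_hidden_in_range)
  then have "finite (pattern ` S)"
    by (rule finite_subset) (simp add: finite_PiE assms(1))
  then have "\<not> inj_on pattern S"
    using assms(2) finite_imageD by blast
  then obtain a c where "a \<in> S" "c \<in> S" "a \<noteq> c" "pattern a = pattern c"
    unfolding inj_on_def by blast
  moreover have "node_val \<sigma> d N E w b a v = node_val \<sigma> d N E w b c v"
    if "pattern a = pattern c" "d \<le> v" "v < N - 1" for v
    using fun_cong[OF that(1), of v] that(2,3) by (simp add: pattern_def)
  ultimately show ?thesis using that by blast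
qed

lemma H_arch_midpoint:
  assumes "mono \<sigma>" "finite (range \<sigma>)" "g \<in> H_arch \<sigma> d N E" "infinite S"
  obtains a c where "a \<in> S" "c \<in> S" "a \<noteq> c" "g (\<lambda>i. (a i + c i) / 2) = (g a + g c) / 2"
proof -
  obtain w b where g: "g = (\<lambda>x. node_val \<sigma> d N E w b x (N - 1))"
    using assms(3) by (auto simp: H_arch_def)
  obtain a c where "a \<in> S" "c \<in> S" "a \<noteq> c"
    "\<And>v. d \<le> v \<Longrightarrow> v < N - 1 \<Longrightarrow> node_val \<sigma> d N E w b a v = node_val \<sigma> d N E w b c v"
    using hidden_values_collide[OF assms(2,4)] by metis
  with node_val_midpoint[OF assms(1)] that show ?thesis
    unfolding g by blast
qed

lemma mono_heaviside: "mono heaviside"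
  by (auto intro!: monoI simp: heaviside_def)

lemma finite_range_heaviside: "finite (range heaviside)"
proof -
  have "range heaviside \<subseteq> {0, 1}"
    by (auto simp: heaviside_def)
  then show ?thesis by (rule finite_subset) simp
qed

lemma unit_cube_midpoint:
  assumes "a \<in> unit_cube d" "c \<in> unit_cube d"
  shows "(\<lambda>i. (a i + c i) / 2) \<in> unit_cube d"
  using assms by (auto simp: unit_cube_def) (metis add_mono one_add_one)

lemma sup_dist_ge:
  assumes "x \<in> unit_cube d" "r \<le> \<bar>f x - g x\<bar>"
  shows "ereal r \<le> sup_dist d f g"
  unfolding sup_dist_def using assms by (intro SUP_upper2) auto

definition above_parabola :: "(nat \<Rightarrow> real) \<Rightarrow> real" where
  "above_parabola x = (if 1 \<le> (x 0)\<^sup>2 + x 1 then 1 else 0)"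

definition parabola_point :: "real \<Rightarrow> nat \<Rightarrow> real" where
  "parabola_point t = (\<lambda>i. if i = 0 then t else if i = 1 then 1 - t\<^sup>2 else 0)"

lemma above_parabola_in_monotone_class:
  assumes "d \<ge> 2"
  shows "above_parabola \<in> monotone_class d"
proof -
  have "above_parabola x \<le> above_parabola y"
    if "x \<in> unit_cube d" "y \<in> unit_cube d" "\<forall>i<d. x i \<le> y i" for x y
  proof -
    have "x 0 \<le> y 0" "x 1 \<le> y 1" "0 \<le> x 0"
      using that assms by (auto simp: unit_cube_def)
    then have "(x 0)\<^sup>2 + x 1 \<le> (y 0)\<^sup>2 + y 1"
      by (simp add: add_mono power_mono)
    then show ?thesis by (auto simp: above_parabola_def)
  qed
  then show ?thesis by (auto simp: monotone_class_def above_parabola_def)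
qed

lemma parabola_point_in_unit_cube:
  assumes "d \<ge> 2" "0 \<le> t" "t \<le> 1"
  shows "parabola_point t \<in> unit_cube d"
  using assms power_le_one[of t 2] by (auto simp: unit_cube_def parabola_point_def)

lemma above_parabola_parabola_point: "above_parabola (parabola_point t) = 1"
  by (simp add: above_parabola_def parabola_point_def)

lemma above_parabola_midpoint:
  assumes "t \<noteq> s"
  shows "above_parabola (\<lambda>i. (parabola_point t i + parabola_point s i) / 2) = 0"
proof -
  have "((t + s) / 2)\<^sup>2 + (1 - t\<^sup>2 + (1 - s\<^sup>2)) / 2 = 1 - (t - s)\<^sup>2 / 4"
    by (simp add: power2_eq_square field_simps)
  moreover have "(t - s)\<^sup>2 > 0"
    using assms by simp
  ultimately show ?thesis
    by (simp add: above_parabola_def parabola_point_def)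
qed

lemma sup_dist_above_parabola:
  assumes "d \<ge> 2" "mono \<sigma>" "finite (range \<sigma>)" "g \<in> H_arch \<sigma> d N E"
  shows "1/2 \<le> sup_dist d above_parabola g"
proof -
  let ?P = "parabola_point ` {0..1}"
  have "inj_on parabola_point {0..1}"
    by (rule inj_onI) (drule fun_cong[of _ _ 0], simp add: parabola_point_def)
  then have "infinite ?P"
    by (simp add: finite_image_iff)
  then obtain a c where ac: "a \<in> ?P" "c \<in> ?P" "a \<noteq> c"
    and g_mid: "g (\<lambda>i. (a i + c i) / 2) = (g a + g c) / 2"
    using H_arch_midpoint[OF assms(2-4)] by blast
  then obtain t s where ts: "t \<in> {0..1}" "s \<in> {0..1}" "t \<noteq> s"
    and a: "a = parabola_point t" and c: "c = parabola_point s"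
    by blast
  let ?m = "\<lambda>i. (a i + c i) / 2"
  have a_cube: "a \<in> unit_cube d" and c_cube: "c \<in> unit_cube d"
    using ts parabola_point_in_unit_cube[OF assms(1)] unfolding a c by auto
  note cube = a_cube c_cube unit_cube_midpoint[OF a_cube c_cube]
  have target: "above_parabola a = 1" "above_parabola c = 1" "above_parabola ?m = 0"
    unfolding a c using above_parabola_parabola_point above_parabola_midpoint[OF \<open>t \<noteq> s\<close>]
    by simp_all
  have "\<exists>x\<in>unit_cube d. 1/2 \<le> \<bar>above_parabola x - g x\<bar>"
  proof (rule ccontr)
    assume "\<not> ?thesis"
    then have "\<bar>1 - g a\<bar> < 1/2" "\<bar>1 - g c\<bar> < 1/2" "\<bar>0 - g ?m\<bar> < 1/2"
      using cube target by (auto simp: not_le)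
    with g_mid show False by (auto simp: abs_less_iff)
  qed
  then obtain x where "x \<in> unit_cube d" "1/2 \<le> \<bar>above_parabola x - g x\<bar>" ..
  then have "ereal (1/2) \<le> sup_dist d above_parabola g"
    by (rule sup_dist_ge)
  then show ?thesis
    by (simp add: divide_ereal_def)
qed

theorem proposition4:
  fixes d N :: nat and E :: "(nat \<times> nat) set"
  assumes "d \<ge> 2" and "architecture d N E"
  shows "(SUP f\<in>monotone_class d. INF g\<in>H_arch heaviside d N E. sup_dist d f g) \<ge> 1/2"
proof -
  have "1/2 \<le> (INF g\<in>H_arch heaviside d N E. sup_dist d above_parabola g)"
    using sup_dist_above_parabola[OF assms(1) mono_heaviside finite_range_heaviside]
    by (intro INF_greatest)
  also have "\<dots> \<le> (SUP f\<in>monotone_class d. INF g\<in>H_arch heaviside d N E. sup_dist d f g)"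
    using above_parabola_in_monotone_class[OF assms(1)] by (rule SUP_upper)
  finally show ?thesis .
qed

end
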